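(* Let $q=2^m$ with $m\ge 4$ even. Then the trace code $\mathrm{Tr}_{q^2/q}(\mathcal C_{\{3,5\}})$ has parameters $[q+1,4,q-4]_q$.
   Context: Let $U_{q+1}$ be the set of $(q+1)$-th roots of unity in $\mathrm{GF}(q^2)$; coordinates are indexed by $U_{q+1}$. Define $\mathcal C_{\{3,5\}}=\{(a_3u^3+a_{q-2}u^{q-2}+a_5u^5+a_{q-4}u^{q-4})_{u\in U_{q+1}}: a_3,a_{q-2},a_5,a_{q-4}\in\mathrm{GF}(q^2)\}$, and $\mathrm{Tr}_{q^2/q}(\mathcal C)=\{(\mathrm{Tr}_{q^2/q}(c_u))_{u\in U_{q+1}}:(c_u)\in\mathcal C\}$, where $\mathrm{Tr}_{q^2/q}(x)=x+x^q$. $[n,k,d]_q$ denotes a linear code over $\mathrm{GF}(q)$ of length $n$, dimension $k$, minimum distance $d$. *)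

theory Defs
  imports Main
begin

text \<open>Ambient field: a finite field of type 'a with q^2 elements, playing GF(q^2).
  Vectors indexed by the set of (q+1)-th roots of unity are functions 'a => 'a
  that vanish outside the index set.\<close>

definition roots_U :: "nat \<Rightarrow> 'a::field set" where
  "roots_U q = {u. u ^ (q + 1) = 1}"

definition subfield_GF :: "nat \<Rightarrow> 'a::field set" where
  "subfield_GF q = {x. x ^ q = x}"

definition trace_rel :: "nat \<Rightarrow> 'a::field \<Rightarrow> 'a" where
  "trace_rel q x = x + x ^ q"

definition code_C35 :: "nat \<Rightarrow> ('a::field \<Rightarrow> 'a) set" where
  "code_C35 q = {(\<lambda>u. if u \<in> roots_U q then
        a3 * u ^ 3 + aq2 * u ^ (q - 2) + a5 * u ^ 5 + aq4 * u ^ (q - 4) else 0)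
      | a3 aq2 a5 aq4. True}"

definition trace_code :: "nat \<Rightarrow> ('a::field \<Rightarrow> 'a) set \<Rightarrow> ('a \<Rightarrow> 'a) set" where
  "trace_code q C = {(\<lambda>u. if u \<in> roots_U q then trace_rel q (c u) else 0) | c. c \<in> C}"

definition hamming_weight :: "'b set \<Rightarrow> ('b \<Rightarrow> 'a::zero) \<Rightarrow> nat" where
  "hamming_weight I c = card {i \<in> I. c i \<noteq> 0}"

definition linear_code_params ::
  "'a::field set \<Rightarrow> 'b set \<Rightarrow> ('b \<Rightarrow> 'a) set \<Rightarrow> nat \<Rightarrow> nat \<Rightarrow> nat \<Rightarrow> bool" where
  "linear_code_params K I C n k d \<longleftrightarrow>
     (\<forall>c\<in>C. \<forall>i. (i \<in> I \<longrightarrow> c i \<in> K) \<and> (i \<notin> I \<longrightarrow> c i = 0)) \<and>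
     (\<lambda>_. 0) \<in> C \<and>
     (\<forall>x\<in>C. \<forall>y\<in>C. (\<lambda>i. x i + y i) \<in> C) \<and>
     (\<forall>a\<in>K. \<forall>x\<in>C. (\<lambda>i. a * x i) \<in> C) \<and>
     finite I \<and> card I = n \<and>
     finite C \<and> card C = card K ^ k \<and>
     d = Min {hamming_weight I c | c. c \<in> C \<and> c \<noteq> (\<lambda>_. 0)}"

end

theory Submission
  imports Defs "HOL-Computational_Algebra.Polynomial" "HOL-Computational_Algebra.Primes"
begin

(* On U the Frobenius u |-> u^q is inversion, so u^(q-2) = (u^3)^q and u^(q-4) = (u^5)^q, and the
   trace code consists of the words c(A,B) = (Tr(A u^3 + B u^5))_{u in U}, with (A,B) determined
   by the word.  Writing A = a^2, B = b^2 (every element of GF(q^2) is a square),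
   u^5 Tr(A u^3 + B u^5) = (b u^5 + a u^4 + a^q u + b^q)^2, so a nonzero word vanishes at most five
   times on U and has weight at least q + 1 - 5 = q - 4.  For m even a primitive cube root of
   unity w lies in GF(q); for x in U - {1} the point y = w^2 (x + w) / (x + w^2) lies in U again
   and (x + 1/x + 1)(y + 1/y + 1) = 1.  Then with c = x + 1/x + y + 1/y + 1 in GF(q),
   u^5 + c u^4 + c u + 1 = (u + 1)(u + x)(u + 1/x)(u + y)(u + 1/y), so the word c(c^2, 1) vanishes
   at exactly five points of U and has weight q - 4. *)

section \<open>Finite fields\<close>

(* The library proves this for the class finite_field; the statement needs the sort {finite, field}. *)
lemma finite_field_power_card_minus_1:
  fixes x :: "'a::{finite,field}"
  assumes "x \<noteq> 0"
  shows "x ^ (card (UNIV :: 'a set) - 1) = 1"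
proof -
  have "(\<Prod>y\<in>UNIV - {0}. x * y) = (\<Prod>y\<in>UNIV - {0::'a}. y)"
    by (rule prod.reindex_bij_witness[of _ "\<lambda>y. y / x" "\<lambda>y. x * y"]) (use assms in auto)
  moreover have "(\<Prod>y\<in>UNIV - {0}. x * y) = x ^ card (UNIV - {0::'a}) * (\<Prod>y\<in>UNIV - {0::'a}. y)"
    by (simp add: prod.distrib)
  moreover have "(\<Prod>y\<in>UNIV - {0::'a}. y) \<noteq> 0"
    by simp
  ultimately show ?thesis
    by (simp add: card_Diff_subset)
qed

lemma finite_field_power_card:
  fixes x :: "'a::{finite,field}"
  shows "x ^ card (UNIV :: 'a set) = x"
proof (cases "x = 0")
  case False
  have "card (UNIV :: 'a set) = Suc (card (UNIV :: 'a set) - 1)"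
    using finite_UNIV_card_ge_0[where 'a='a] by simp
  then show ?thesis
    using finite_field_power_card_minus_1[OF False] by (metis power_Suc mult_1_right)
qed (simp add: finite_UNIV_card_ge_0)

lemma finite_field_square_root:
  fixes x :: "'a::{finite,field}"
  assumes "even (card (UNIV :: 'a set))"
  obtains y where "y^2 = x"
proof
  show "(x ^ (card (UNIV :: 'a set) div 2))^2 = x"
    using assms finite_field_power_card[of x] by (simp flip: power_mult)
qed

lemma card_power_eq_le:
  fixes c :: "'a::idom"
  assumes "n > 0"
  shows "card {x. x ^ n = c} \<le> n"
proof -
  let ?p = "monom 1 n + [:-c:]"
  have "degree ?p = n"
    using assms by (subst degree_add_eq_left) (simp_all add: degree_monom_eq)
  then have "?p \<noteq> 0"
    using assms by auto
  have "{x. x ^ n = c} = {x. poly ?p x = 0}"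
    by (auto simp: poly_monom)
  then show ?thesis
    using card_poly_roots_bound[OF \<open>?p \<noteq> 0\<close>] \<open>degree ?p = n\<close> by simp
qed

lemma card_roots_of_unity_finite_field:
  assumes de: "d * e = card (UNIV :: 'a::{finite,field} set) - 1"
  shows "card {x::'a. x ^ d = 1} = d"
proof -
  let ?R = "{x::'a. x ^ d = 1}" and ?A = "UNIV - {0::'a}"
  have "card (UNIV :: 'a set) \<ge> card {0::'a, 1}"
    by (rule card_mono) auto
  then have "d * e > 0"
    using de by simp
  then have "d > 0" "e > 0"
    by simp_all
  have "?A \<subseteq> (\<Union>r\<in>?R. {x. x ^ e = r})"
  proof
    fix x assume "x \<in> ?A"
    then have "(x ^ e) ^ d = 1"
      using finite_field_power_card_minus_1[of x] de by (simp add: mult.commute flip: power_mult)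
    then show "x \<in> (\<Union>r\<in>?R. {x. x ^ e = r})"
      by auto
  qed
  then have "card ?A \<le> card (\<Union>r\<in>?R. {x. x ^ e = r})"
    by (rule card_mono[OF finite])
  also have "\<dots> \<le> (\<Sum>r\<in>?R. card {x::'a. x ^ e = r})"
    by (simp add: card_UN_le)
  also have "\<dots> \<le> (\<Sum>r\<in>?R. e)"
    by (rule sum_mono) (rule card_power_eq_le[OF \<open>e > 0\<close>])
  also have "\<dots> = card ?R * e"
    by simp
  finally have "d * e \<le> card ?R * e"
    using de by (simp add: card_Diff_subset)
  then have "d \<le> card ?R"
    using \<open>e > 0\<close> by simp
  then show ?thesis
    using card_power_eq_le[OF \<open>d > 0\<close>, of "1::'a"] by simp
qed

lemma power3_eq_1_iff:
  fixes w :: "'a::idom"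
  shows "w^3 = 1 \<longleftrightarrow> w = 1 \<or> w^2 + w + 1 = 0"
proof -
  have "w^3 - 1 = (w - 1) * (w^2 + w + 1)"
    by (simp add: algebra_simps power2_eq_square power3_eq_cube)
  then show ?thesis
    by (metis eq_iff_diff_eq_0 mult_eq_0_iff)
qed

section \<open>Characteristic two\<close>

lemma CHAR_eq_2_if_card_power_2:
  assumes "card (UNIV :: 'a::{finite,field} set) = 2 ^ n" "n > 0"
  shows "CHAR('a) = 2"
proof (rule CHAR_eq_posI)
  have "odd (card (UNIV :: 'a set) - 1)"
    using assms by simp
  then have "(-1::'a) = 1"
    using finite_field_power_card_minus_1[of "-1::'a"] by simp
  then have "(1::'a) + 1 = 0"
    using add.right_inverse[of "1::'a"] by simp
  then show "of_nat 2 = (0::'a)"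
    by simp
qed (auto dest: less_2_cases)

lemma two_eq_0_if_CHAR_2: "CHAR('a::semiring_1) = 2 \<Longrightarrow> (2::'a) = 0"
  by (metis of_nat_CHAR of_nat_numeral)

lemma add_eq_0_iff_eq_CHAR_2:
  fixes a b :: "'a::ring_1"
  assumes "CHAR('a) = 2"
  shows "a + b = 0 \<longleftrightarrow> a = b"
  using minus_CHAR_2[OF assms, of a b] by (metis eq_iff_diff_eq_0)

lemma square_add_CHAR_2:
  fixes a b :: "'a::comm_semiring_1"
  assumes "CHAR('a) = 2"
  shows "(a + b)^2 = a^2 + b^2"
  by (rule freshmans_dream) (simp_all add: assms)

lemma square_eq_1_CHAR_2:
  fixes a :: "'a::idom"
  assumes "CHAR('a) = 2" "a^2 = 1"
  shows "a = 1"
proof -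
  have "(a + 1)^2 = 0"
    using assms square_add_CHAR_2[OF assms(1), of a 1] two_eq_0_if_CHAR_2[OF assms(1)] by simp
  then show ?thesis
    using add_eq_0_iff_eq_CHAR_2[OF assms(1)] by simp
qed

lemma cube_root_of_unity_CHAR_2:
  fixes w :: "'a::idom"
  assumes "CHAR('a) = 2" "w^2 + w + 1 = 0"
  shows "w^2 = w + 1" "(z + w) * (z + w^2) = z^2 + z + 1"
proof -
  have "w^2 + (w + 1) = 0"
    using assms(2) by (simp add: add.assoc)
  then show "w^2 = w + 1"
    using add_eq_0_iff_eq_CHAR_2[OF assms(1)] by blast
  then have "w + w^2 = 1"
    using two_eq_0_if_CHAR_2[OF assms(1)] by (simp add: add.assoc flip: mult_2)
  moreover have "w^3 = 1"
    using assms(2) power3_eq_1_iff by blast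
  moreover have "(z + w) * (z + w^2) = z^2 + (w + w^2) * z + w^3"
    by (simp add: algebra_simps power2_eq_square power3_eq_cube)
  ultimately show "(z + w) * (z + w^2) = z^2 + z + 1"
    by simp
qed

lemma cube_root_partner_CHAR_2:
  fixes w x :: "'a::field"
  assumes char: "CHAR('a) = 2" and w: "w^2 + w + 1 = 0" and "x \<noteq> 0" "x \<noteq> w" "x \<noteq> w^2"
  defines "y \<equiv> w^2 * (x + w) / (x + w^2)"
  shows "(x + inverse x + 1) * (y + inverse y + 1) = 1"
proof -
  have two: "(2::'a) = 0"
    using two_eq_0_if_CHAR_2[OF char] .
  have w_sq: "w^2 = w + 1" and w_cube: "w^3 = 1"
    using cube_root_of_unity_CHAR_2[OF char w] w power3_eq_1_iff[of w] by auto
  have phi: "z + inverse z + 1 = (z + w) * (z + w^2) / z" if "z \<noteq> 0" for z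
    using that cube_root_of_unity_CHAR_2(2)[OF char w, of z] by (simp add: field_simps power2_eq_square)
  have "x + w \<noteq> 0" "x + w^2 \<noteq> 0"
    using assms(4,5) add_eq_0_iff_eq_CHAR_2[OF char] by auto
  have "y + w = x / (x + w^2)"
  proof -
    have "w^2 * (x + w) + w * (x + w^2) = (2 * w + 1) * x + 2 * w^3"
      using w_sq by (simp add: algebra_simps power2_eq_square power3_eq_cube)
    then show ?thesis
      using two \<open>x + w^2 \<noteq> 0\<close> by (simp add: y_def field_simps)
  qed
  moreover have "y + w^2 = w^2 / (x + w^2)"
  proof -
    have "w^2 * (x + w) + w^2 * (x + w^2) = 2 * w^2 * x + w^3 * (w + 1)"
      by (simp add: algebra_simps power2_eq_square power3_eq_cube)
    then show ?thesis
      using w_cube w_sq two \<open>x + w^2 \<noteq> 0\<close> by (simp add: y_def field_simps)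
  qed
  moreover have "y \<noteq> 0" "w \<noteq> 0"
    using \<open>x + w \<noteq> 0\<close> \<open>x + w^2 \<noteq> 0\<close> w_cube by (auto simp: y_def)
  ultimately have "(x + inverse x + 1) * (y + inverse y + 1)
      = ((x + w) * (x + w^2) / x) * ((x / (x + w^2)) * (w^2 / (x + w^2)) / (w^2 * (x + w) / (x + w^2)))"
    using phi[of x] phi[of y] \<open>x \<noteq> 0\<close> by (simp add: y_def[symmetric])
  also have "\<dots> = 1"
    using \<open>x \<noteq> 0\<close> \<open>w \<noteq> 0\<close> \<open>x + w \<noteq> 0\<close> \<open>x + w^2 \<noteq> 0\<close> by (simp add: divide_simps)
  finally show ?thesis .
qed

lemma quintic_factorization_CHAR_2:
  fixes x y u :: "'a::field"
  assumes "CHAR('a) = 2" "x \<noteq> 0" "y \<noteq> 0"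
    and rel: "(x + inverse x + 1) * (y + inverse y + 1) = 1"
  defines "c \<equiv> x + inverse x + y + inverse y + 1"
  shows "u^5 + c * u^4 + c * u + 1 = (u + 1) * (u + x) * (u + inverse x) * (u + y) * (u + inverse y)"
proof -
  define s t where "s = x + inverse x" and "t = y + inverse y"
  have "(u + x) * (u + inverse x) = u^2 + s * u + 1" "(u + y) * (u + inverse y) = u^2 + t * u + 1"
    using assms(2,3) by (simp_all add: s_def t_def algebra_simps power2_eq_square)
  moreover have "(u + 1) * (u^2 + s * u + 1) * (u^2 + t * u + 1)
      = u^5 + (s + t + 1) * u^4 + (s + t + 1) * u + 1 + ((s + 1) * (t + 1) + 1) * (u^3 + u^2)"
    by (simp add: algebra_simps power2_eq_square power3_eq_cube eval_nat_numeral)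
  moreover have "(s + 1) * (t + 1) + 1 = 0"
    using rel two_eq_0_if_CHAR_2[OF assms(1)] by (simp add: s_def t_def)
  ultimately show ?thesis
    by (simp add: c_def s_def t_def mult.assoc add.assoc)
qed

lemma card_reciprocal_pairs_CHAR_2:
  fixes x y :: "'a::field"
  assumes char: "CHAR('a) = 2" and "x \<noteq> 0" "y \<noteq> 0" "x \<noteq> 1"
    and rel: "(x + inverse x + 1) * (y + inverse y + 1) = 1"
  shows "card {1, x, inverse x, y, inverse y} = 5"
proof -
  define s t where "s = x + inverse x" and "t = y + inverse y"
  have "z = 1" if "z \<noteq> 0" "z = inverse z" for z :: 'a
    using that square_eq_1_CHAR_2[OF char, of z] by (simp add: power2_eq_square field_simps)
  then have "s \<noteq> 0"
    using assms(2,4) add_eq_0_iff_eq_CHAR_2[OF char] by (auto simp: s_def)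
  have "t \<noteq> 0"
    using rel \<open>s \<noteq> 0\<close> by (auto simp: s_def t_def)
  have "t \<noteq> s"
  proof
    assume "t = s"
    then have "(s + 1)^2 = 1"
      using rel by (simp add: s_def t_def power2_eq_square)
    then show False
      using square_eq_1_CHAR_2[OF char] \<open>s \<noteq> 0\<close> by fastforce
  qed
  have "y \<noteq> 1" "y \<noteq> inverse y"
    using \<open>t \<noteq> 0\<close> add_eq_0_iff_eq_CHAR_2[OF char] by (auto simp: t_def)
  moreover have "y \<noteq> x" "y \<noteq> inverse x"
    using \<open>t \<noteq> s\<close> by (auto simp: s_def t_def add.commute)
  moreover have "x \<noteq> inverse x"
    using \<open>s \<noteq> 0\<close> add_eq_0_iff_eq_CHAR_2[OF char] by (auto simp: s_def)
  ultimately have "distinct [1, x, inverse x, y, inverse y]"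
    using assms(4) by (auto dest: inverse_eq_imp_eq)
  then show ?thesis
    using distinct_card by fastforce
qed

section \<open>The trace code\<close>

lemma hamming_weight_eq_card_minus_zeros:
  assumes "finite I"
  shows "hamming_weight I c = card I - card {i \<in> I. c i = 0}"
proof -
  have "{i \<in> I. c i \<noteq> 0} = I - {i \<in> I. c i = 0}"
    by auto
  then show ?thesis
    unfolding hamming_weight_def using assms by (simp add: card_Diff_subset)
qed

context
  fixes q m :: nat
  assumes card_UNIV: "card (UNIV :: 'a::{finite,field} set) = q^2"
    and q_eq: "q = 2^m" and m_ge_3: "3 \<le> m"
begin

lemma q_ge_8: "q \<ge> 8"
  using q_eq power_increasing[OF m_ge_3, of "2::nat"] by simp

lemma CHAR_eq_2: "CHAR('a) = 2"
  using CHAR_eq_2_if_card_power_2[of "2 * m"] card_UNIV q_eq m_ge_3 by (simp add: power_mult mult.commute)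

lemma power_q_add: "((a::'a) + b) ^ q = a ^ q + b ^ q"
  by (rule freshmans_dream') (simp_all add: CHAR_eq_2 q_eq)

lemma power_q_power_q: "((a::'a) ^ q) ^ q = a"
  using finite_field_power_card[of a] card_UNIV by (simp add: power2_eq_square flip: power_mult)

lemma card_UNIV_minus_1: "(q - 1) * (q + 1) = card (UNIV :: 'a set) - 1"
  using card_UNIV q_ge_8 by (simp add: power2_eq_square algebra_simps)

lemma card_subfield_GF: "card (subfield_GF q :: 'a set) = q"
proof -
  have "card {x::'a. x ^ (q - 1) = 1} = q - 1"
    by (rule card_roots_of_unity_finite_field[OF card_UNIV_minus_1])
  moreover have "subfield_GF q = insert 0 {x::'a. x ^ (q - 1) = 1}"
  proof -
    have "x ^ q = x \<longleftrightarrow> x = 0 \<or> x ^ (q - 1) = 1" for x :: 'a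
      using q_ge_8 power_eq_if[of x q] by (cases "x = 0") auto
    then show ?thesis
      unfolding subfield_GF_def by auto
  qed
  moreover have "0 \<notin> {x::'a. x ^ (q - 1) = 1}"
    using q_ge_8 by (simp add: power_0_left)
  ultimately show ?thesis
    using q_ge_8 by simp
qed

lemma card_roots_U: "card (roots_U q :: 'a set) = q + 1"
  unfolding roots_U_def
  by (rule card_roots_of_unity_finite_field[where e = "q - 1"])
     (use card_UNIV_minus_1 in \<open>simp add: mult.commute\<close>)

lemma roots_U_nonzero: "(u::'a) \<in> roots_U q \<Longrightarrow> u \<noteq> 0"
  by (auto simp: roots_U_def)

lemma roots_U_power_q:
  assumes "(u::'a) \<in> roots_U q"
  shows "u ^ q = inverse u"
proof -
  have "u * u ^ q = 1"
    using assms by (simp add: roots_U_def)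
  then show ?thesis
    by (simp add: inverse_unique)
qed

lemma roots_U_power_power_q:
  assumes "(u::'a) \<in> roots_U q"
  shows "(u ^ k) ^ q = inverse u ^ k"
  using roots_U_power_q[OF assms] by (metis power_mult mult.commute)

lemma roots_U_power_diff:
  assumes "(u::'a) \<in> roots_U q" "k \<le> q + 1"
  shows "u ^ (q + 1 - k) = (u ^ k) ^ q"
proof -
  have "u ^ k * u ^ (q + 1 - k) = 1"
    using assms by (simp add: roots_U_def flip: power_add)
  then show ?thesis
    using roots_U_power_power_q[OF assms(1)] by (simp add: inverse_unique power_inverse)
qed

lemma roots_U_inter_subfield_GF:
  assumes "(u::'a) \<in> roots_U q" "u \<in> subfield_GF q"
  shows "u = 1"
proof -
  have "u^2 = 1"
    using assms by (simp add: roots_U_def subfield_GF_def power2_eq_square)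
  then show ?thesis
    using square_eq_1_CHAR_2[OF CHAR_eq_2] by simp
qed

lemma roots_U_inverse: "(u::'a) \<in> roots_U q \<Longrightarrow> inverse u \<in> roots_U q"
  unfolding roots_U_def by (simp only: mem_Collect_eq power_inverse inverse_1)

lemma subfield_GF_power:
  assumes "(w::'a) \<in> subfield_GF q"
  shows "w ^ k \<in> subfield_GF q"
proof -
  have "(w ^ k) ^ q = (w ^ q) ^ k"
    by (simp add: mult.commute flip: power_mult)
  then show ?thesis
    using assms by (simp add: subfield_GF_def)
qed

lemma trace_rel_add: "trace_rel q ((a::'a) + b) = trace_rel q a + trace_rel q b"
  by (simp add: trace_rel_def power_q_add)

lemma trace_rel_mult_power_q: "trace_rel q ((a::'a) * v ^ q) = trace_rel q (a ^ q * v)"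
  by (simp add: trace_rel_def power_mult_distrib power_q_power_q)

lemma trace_rel_mult_subfield_GF:
  "(k::'a) \<in> subfield_GF q \<Longrightarrow> trace_rel q (k * v) = k * trace_rel q v"
  by (simp add: trace_rel_def subfield_GF_def power_mult_distrib distrib_left)

lemma trace_rel_in_subfield_GF: "trace_rel q (v::'a) \<in> subfield_GF q"
  by (simp add: trace_rel_def subfield_GF_def power_q_add power_q_power_q)

definition trace_word :: "'a \<Rightarrow> 'a \<Rightarrow> 'a \<Rightarrow> 'a" where
  "trace_word A B = (\<lambda>u. if u \<in> roots_U q then trace_rel q (A * u^3 + B * u^5) else 0)"

lemma trace_rel_C35_eq:
  assumes "(u::'a) \<in> roots_U q"
  shows "trace_rel q (a3 * u ^ 3 + aq2 * u ^ (q - 2) + a5 * u ^ 5 + aq4 * u ^ (q - 4))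
       = trace_rel q ((a3 + aq2 ^ q) * u ^ 3 + (a5 + aq4 ^ q) * u ^ 5)"
proof -
  have "u ^ (q - 2) = (u ^ 3) ^ q" "u ^ (q - 4) = (u ^ 5) ^ q"
    using roots_U_power_diff[OF assms, of 3] roots_U_power_diff[OF assms, of 5] q_ge_8 by simp_all
  then show ?thesis
    by (simp add: trace_rel_add trace_rel_mult_power_q distrib_right)
qed

lemma trace_code_C35_eq: "trace_code q (code_C35 q) = (\<lambda>(A, B). trace_word A B) ` UNIV"
proof -
  let ?word = "\<lambda>a3 aq2 a5 aq4 u. if u \<in> roots_U q then trace_rel q (if u \<in> roots_U q
     then a3 * u ^ 3 + aq2 * u ^ (q - 2) + a5 * u ^ 5 + aq4 * u ^ (q - 4) else 0) else (0::'a)"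
  have word_eq: "?word a3 aq2 a5 aq4 = trace_word (a3 + aq2 ^ q) (a5 + aq4 ^ q)" for a3 aq2 a5 aq4
    by (auto simp: trace_word_def trace_rel_C35_eq)
  have "trace_code q (code_C35 q) = {?word a3 aq2 a5 aq4 | a3 aq2 a5 aq4. True}"
    unfolding trace_code_def code_C35_def by force
  also have "\<dots> = (\<lambda>(A, B). trace_word A B) ` UNIV"
  proof (intro equalityI subsetI)
    fix c assume "c \<in> {?word a3 aq2 a5 aq4 | a3 aq2 a5 aq4. True}"
    then show "c \<in> (\<lambda>(A, B). trace_word A B) ` UNIV"
      using word_eq by auto
  next
    fix c assume "c \<in> (\<lambda>(A, B). trace_word A B) ` UNIV"
    then obtain A B where "c = trace_word A B"
      by auto
    then have "c = ?word A 0 B 0"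
      using word_eq[of A 0 B 0] q_ge_8 by (simp add: power_0_left)
    then show "c \<in> {?word a3 aq2 a5 aq4 | a3 aq2 a5 aq4. True}"
      by blast
  qed
  finally show ?thesis .
qed

lemma trace_word_0: "trace_word 0 0 = (\<lambda>_. 0)"
  using q_ge_8 by (auto simp: trace_word_def trace_rel_def power_0_left)

lemma trace_word_add: "(\<lambda>u. trace_word A B u + trace_word A' B' u) = trace_word (A + A') (B + B')"
  by (auto simp: trace_word_def algebra_simps simp flip: trace_rel_add)

lemma trace_word_mult_subfield_GF:
  "k \<in> subfield_GF q \<Longrightarrow> (\<lambda>u. k * trace_word A B u) = trace_word (k * A) (k * B)"
  by (auto simp: trace_word_def algebra_simps simp flip: trace_rel_mult_subfield_GF)

lemma power_5_mult_trace_rel: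
  assumes "(u::'a) \<in> roots_U q" "a^2 = A" "b^2 = B"
  shows "u^5 * trace_rel q (A * u^3 + B * u^5) = (b * u^5 + a * u^4 + a^q * u + b^q)^2"
proof -
  have "u \<noteq> 0"
    using roots_U_nonzero[OF assms(1)] .
  have "u^5 * trace_rel q (A * u^3 + B * u^5)
      = u^5 * (A * u^3 + B * u^5 + A^q * inverse u ^ 3 + B^q * inverse u ^ 5)"
    using roots_U_power_power_q[OF assms(1)]
    by (simp add: trace_rel_def power_q_add power_mult_distrib add.assoc)
  also have "\<dots> = A * u^8 + B * u^10 + A^q * u^2 + B^q"
    using \<open>u \<noteq> 0\<close> by (simp add: field_simps eval_nat_numeral)
  also have "\<dots> = (b * u^5)^2 + (a * u^4)^2 + (a^q * u)^2 + (b^q)^2"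
  proof -
    have "(a^q)^2 = A^q" "(b^q)^2 = B^q"
      using assms(2,3) by (metis power_mult mult.commute)+
    moreover have "(u^5)^2 = u^10" "(u^4)^2 = u^8"
      by (simp_all flip: power_mult)
    ultimately show ?thesis
      using assms(2,3) by (simp add: power_mult_distrib)
  qed
  also have "\<dots> = (b * u^5 + a * u^4 + a^q * u + b^q)^2"
    by (simp add: square_add_CHAR_2[OF CHAR_eq_2])
  finally show ?thesis .
qed

lemma card_zeros_trace_word_le_5:
  assumes "A \<noteq> 0 \<or> B \<noteq> (0::'a)"
  shows "card {u \<in> roots_U q. trace_word A B u = 0} \<le> 5"
proof -
  have "even (card (UNIV :: 'a set))"
    using card_UNIV q_eq m_ge_3 by simp
  then obtain a b :: 'a where a: "a^2 = A" and b: "b^2 = B"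
    using finite_field_square_root by (metis (no_types))
  define g where "g = [:b^q, a^q, 0, 0, a, b:]"
  have "coeff g 4 = a" "coeff g 5 = b"
    by (simp_all add: g_def eval_nat_numeral)
  then have "g \<noteq> 0"
    using assms a b by auto
  have "degree g \<le> 5"
    by (simp add: g_def degree_pCons_eq_if)
  have poly_g: "poly g u = b * u^5 + a * u^4 + a^q * u + b^q" for u
    by (simp add: g_def algebra_simps eval_nat_numeral)
  have "{u \<in> roots_U q. trace_word A B u = 0} \<subseteq> {u. poly g u = 0}"
  proof
    fix u assume "u \<in> {u \<in> roots_U q. trace_word A B u = 0}"
    then have "u \<in> roots_U q" "trace_rel q (A * u^3 + B * u^5) = 0"
      by (auto simp: trace_word_def)
    moreover have "u^5 * trace_rel q (A * u^3 + B * u^5) = (poly g u)^2"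
      using power_5_mult_trace_rel[OF \<open>u \<in> roots_U q\<close> a b] poly_g by simp
    ultimately have "(poly g u)^2 = 0"
      by simp
    then show "u \<in> {u. poly g u = 0}"
      by simp
  qed
  then have "card {u \<in> roots_U q. trace_word A B u = 0} \<le> card {u. poly g u = 0}"
    by (rule card_mono[OF finite])
  also have "\<dots> \<le> degree g"
    by (rule card_poly_roots_bound[OF \<open>g \<noteq> 0\<close>])
  finally show ?thesis
    using \<open>degree g \<le> 5\<close> by simp
qed

lemma trace_word_inj:
  assumes "trace_word A B = trace_word A' B'"
  shows "A = A' \<and> B = B'"
proof (rule ccontr)
  assume "\<not> (A = A' \<and> B = B')"
  then have "A + A' \<noteq> 0 \<or> B + B' \<noteq> 0"
    using add_eq_0_iff_eq_CHAR_2[OF CHAR_eq_2] by blast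
  moreover have "trace_word (A + A') (B + B') = (\<lambda>_. 0)"
    using trace_word_add[of A B A' B'] assms two_eq_0_if_CHAR_2[OF CHAR_eq_2] by simp
  then have "{u \<in> roots_U q. trace_word (A + A') (B + B') u = 0} = roots_U q"
    by simp
  ultimately have "card (roots_U q :: 'a set) \<le> 5"
    using card_zeros_trace_word_le_5 by metis
  then show False
    using card_roots_U q_ge_8 by simp
qed

lemma three_dvd_q_minus_1:
  assumes "even m"
  shows "3 dvd q - 1"
proof -
  obtain k where "m = 2 * k"
    using assms by (rule evenE)
  then have "q = 4 ^ k"
    using q_eq by (simp add: power_mult)
  then have "q mod 3 = 1"
    using power_mod[of "4::nat" 3 k] by simp
  then show ?thesis
    using q_ge_8 by (simp add: mod_eq_dvd_iff_nat[symmetric])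
qed

lemma exists_cube_root_of_unity:
  assumes "3 dvd q - 1"
  obtains w :: 'a where "w^2 + w + 1 = 0" "w \<in> subfield_GF q"
proof -
  obtain j where j: "q - 1 = 3 * j"
    using assms by blast
  have "3 * (j * (q + 1)) = card (UNIV :: 'a set) - 1"
    using j card_UNIV_minus_1 by (metis mult.assoc)
  then have "card {x::'a. x^3 = 1} = 3"
    by (rule card_roots_of_unity_finite_field)
  have "\<not> {x::'a. x^3 = 1} \<subseteq> {1}"
  proof
    assume "{x::'a. x^3 = 1} \<subseteq> {1}"
    then have "card {x::'a. x^3 = 1} \<le> card {1::'a}"
      by (rule card_mono[rotated]) simp
    then show False
      using \<open>card {x::'a. x^3 = 1} = 3\<close> by simp
  qed
  then obtain w :: 'a where "w^3 = 1" "w \<noteq> 1"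
    by blast
  then have "w^2 + w + 1 = 0"
    using power3_eq_1_iff by blast
  moreover have "w ^ q = w"
  proof -
    have "q = 3 * j + 1"
      using j q_ge_8 by simp
    then show ?thesis
      using \<open>w^3 = 1\<close> by (simp add: power_add power_mult)
  qed
  ultimately show ?thesis
    using that by (simp add: subfield_GF_def)
qed

lemma cube_root_partner_in_roots_U:
  assumes "w^3 = 1" "(w::'a) \<in> subfield_GF q" "x \<in> roots_U q" "x + w \<noteq> 0" "x + w^2 \<noteq> 0"
  shows "w^2 * (x + w) / (x + w^2) \<in> roots_U q"
proof -
  let ?y = "w^2 * (x + w) / (x + w^2)"
  have "x \<noteq> 0" "w \<noteq> 0"
    using roots_U_nonzero[OF assms(3)] assms(1) by auto
  have "1 + w^2 * x = w^2 * (x + w)"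
    using assms(1) by (simp add: algebra_simps eval_nat_numeral)
  then have "1 + w^2 * x \<noteq> 0"
    using \<open>w \<noteq> 0\<close> assms(4) by simp
  have "w ^ q = w" "(w^2) ^ q = w^2"
    using assms(2) subfield_GF_power[OF assms(2), of 2] by (simp_all add: subfield_GF_def)
  then have "?y ^ q = w^2 * (inverse x + w) / (inverse x + w^2)"
    using roots_U_power_q[OF assms(3)] by (simp add: power_divide power_mult_distrib power_q_add)
  also have "\<dots> = w^2 * (1 + w * x) / (1 + w^2 * x)"
  proof -
    have "inverse x + w = (1 + w * x) / x" "inverse x + w^2 = (1 + w^2 * x) / x"
      using \<open>x \<noteq> 0\<close> by (simp_all add: field_simps)
    then show ?thesis
      using \<open>x \<noteq> 0\<close> by simp
  qed
  finally have "?y ^ q * ?y = (w^4 * (1 + w * x) * (x + w)) / ((1 + w^2 * x) * (x + w^2))"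
    by (simp add: eval_nat_numeral mult_ac)
  also have "w^4 * (1 + w * x) * (x + w) = (1 + w^2 * x) * (x + w^2)"
    using assms(1) by algebra
  finally have "?y ^ q * ?y = 1"
    using \<open>1 + w^2 * x \<noteq> 0\<close> assms(5) by simp
  then show ?thesis
    by (simp add: roots_U_def mult.commute)
qed

lemma trace_word_square_1_eq_0_iff:
  assumes "c \<in> subfield_GF q" "(u::'a) \<in> roots_U q"
  shows "trace_word (c^2) 1 u = 0 \<longleftrightarrow> u^5 + c * u^4 + c * u + 1 = 0"
proof -
  have "u^5 * trace_rel q (c^2 * u^3 + 1 * u^5) = (1 * u^5 + c * u^4 + c^q * u + 1^q)^2"
    by (rule power_5_mult_trace_rel[OF assms(2)]) simp_all
  then have "u^5 * trace_word (c^2) 1 u = (u^5 + c * u^4 + c * u + 1)^2"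
    using assms by (simp add: trace_word_def subfield_GF_def)
  then show ?thesis
    using roots_U_nonzero[OF assms(2)] by (metis mult_eq_0_iff power_not_zero zero_eq_power2)
qed

lemma zeros_trace_word_reciprocal_pairs:
  assumes x: "x \<in> roots_U q" and y: "y \<in> roots_U q"
    and rel: "(x + inverse x + 1) * (y + inverse y + 1) = 1"
  defines "c \<equiv> x + inverse x + y + inverse y + 1"
  shows "c \<in> subfield_GF q"
    and "{u \<in> roots_U q. trace_word (c^2) 1 u = 0} = {1, x, inverse x, y, inverse y}"
proof -
  show "c \<in> subfield_GF q"
    using roots_U_power_q[OF x] roots_U_power_q[OF y] q_ge_8
    by (simp add: c_def subfield_GF_def power_q_add power_inverse algebra_simps)
  have "x \<noteq> 0" "y \<noteq> 0"
    using roots_U_nonzero x y by auto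
  have "trace_word (c^2) 1 u = 0 \<longleftrightarrow> u \<in> {1, x, inverse x, y, inverse y}" if "u \<in> roots_U q" for u
    using trace_word_square_1_eq_0_iff[OF \<open>c \<in> subfield_GF q\<close> that]
      quintic_factorization_CHAR_2[OF CHAR_eq_2 \<open>x \<noteq> 0\<close> \<open>y \<noteq> 0\<close> rel]
      add_eq_0_iff_eq_CHAR_2[OF CHAR_eq_2]
    by (simp add: c_def)
  moreover have "{1, x, inverse x, y, inverse y} \<subseteq> roots_U q"
    using x y roots_U_inverse[OF x] roots_U_inverse[OF y] by (simp add: roots_U_def)
  ultimately show "{u \<in> roots_U q. trace_word (c^2) 1 u = 0} = {1, x, inverse x, y, inverse y}"
    by blast
qed

lemma exists_trace_word_with_5_zeros:
  assumes "even m"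
  obtains c where "c \<in> subfield_GF q" "card {u \<in> roots_U q. trace_word (c^2) 1 u = (0::'a)} = 5"
proof -
  obtain w :: 'a where w: "w^2 + w + 1 = 0" and "w \<in> subfield_GF q"
    using exists_cube_root_of_unity three_dvd_q_minus_1[OF assms] by blast
  then have "w^3 = 1" "w^2 \<in> subfield_GF q"
    using power3_eq_1_iff subfield_GF_power by blast+
  have "\<not> roots_U q \<subseteq> {1::'a}"
    using card_mono[of "{1::'a}" "roots_U q"] card_roots_U q_ge_8 by auto
  then obtain x :: 'a where x: "x \<in> roots_U q" "x \<noteq> 1"
    by blast
  have "x \<noteq> w" "x \<noteq> w^2"
    using roots_U_inter_subfield_GF x \<open>w \<in> subfield_GF q\<close> \<open>w^2 \<in> subfield_GF q\<close> by auto
  then have "x + w \<noteq> 0" "x + w^2 \<noteq> 0"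
    using add_eq_0_iff_eq_CHAR_2[OF CHAR_eq_2] by auto
  define y where "y = w^2 * (x + w) / (x + w^2)"
  have y: "y \<in> roots_U q"
    unfolding y_def by (rule cube_root_partner_in_roots_U) fact+
  have "x \<noteq> 0" "y \<noteq> 0"
    using roots_U_nonzero x y by auto
  have rel: "(x + inverse x + 1) * (y + inverse y + 1) = 1"
    unfolding y_def
    by (rule cube_root_partner_CHAR_2[OF CHAR_eq_2 w \<open>x \<noteq> 0\<close> \<open>x \<noteq> w\<close> \<open>x \<noteq> w^2\<close>])
  show ?thesis
    using that zeros_trace_word_reciprocal_pairs[OF x(1) y rel]
      card_reciprocal_pairs_CHAR_2[OF CHAR_eq_2 \<open>x \<noteq> 0\<close> \<open>y \<noteq> 0\<close> x(2) rel]
    by simp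
qed

lemma min_weight_trace_code_C35:
  assumes "even m"
  shows "Min {hamming_weight (roots_U q) c | c. c \<in> trace_code q (code_C35 q) \<and> c \<noteq> (\<lambda>_. 0::'a)}
      = q - 4"
proof -
  let ?S = "{hamming_weight (roots_U q) c | c. c \<in> trace_code q (code_C35 q) \<and> c \<noteq> (\<lambda>_. 0::'a)}"
  have weight: "hamming_weight (roots_U q) (trace_word A B)
      = q + 1 - card {u \<in> roots_U q. trace_word A B u = 0}" for A B :: 'a
    using hamming_weight_eq_card_minus_zeros[OF finite, of "roots_U q" "trace_word A B"] card_roots_U
    by simp
  have "finite ?S"
    by (rule finite_subset[of _ "hamming_weight (roots_U q) ` trace_code q (code_C35 q)"]) auto
  moreover have "q - 4 \<le> h" if "h \<in> ?S" for h
  proof -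
    obtain c :: "'a \<Rightarrow> 'a"
      where c: "c \<in> trace_code q (code_C35 q)" "c \<noteq> (\<lambda>_. 0)" "h = hamming_weight (roots_U q) c"
      using \<open>h \<in> ?S\<close> by blast
    then obtain A B where "c = trace_word A B"
      unfolding trace_code_C35_eq by auto
    then have "A \<noteq> 0 \<or> B \<noteq> 0"
      using c(2) trace_word_0 by auto
    then have "card {u \<in> roots_U q. trace_word A B u = 0} \<le> 5"
      by (rule card_zeros_trace_word_le_5)
    then show ?thesis
      using c(3) weight \<open>c = trace_word A B\<close> by simp
  qed
  moreover have "q - 4 \<in> ?S"
  proof -
    obtain c where five: "card {u \<in> roots_U q. trace_word (c^2) 1 u = (0::'a)} = 5"
      using exists_trace_word_with_5_zeros[OF assms] by blast
    have "trace_word (c^2) 1 \<noteq> (\<lambda>_. 0)"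
    proof
      assume "trace_word (c^2) 1 = (\<lambda>_. 0)"
      then show False
        using five card_roots_U q_ge_8 by simp
    qed
    moreover have "trace_word (c^2) 1 \<in> trace_code q (code_C35 q)"
      unfolding trace_code_C35_eq by auto
    moreover have "q - 4 = hamming_weight (roots_U q) (trace_word (c^2) 1)"
      using weight five by simp
    ultimately show ?thesis
      by blast
  qed
  ultimately show ?thesis
    by (rule Min_eqI)
qed

lemma card_trace_code_C35:
  "card (trace_code q (code_C35 q) :: ('a \<Rightarrow> 'a) set) = card (subfield_GF q :: 'a set) ^ 4"
proof -
  have "inj (\<lambda>(A, B). trace_word A B)"
    by (auto simp: inj_def dest: trace_word_inj)
  then have "card (trace_code q (code_C35 q) :: ('a \<Rightarrow> 'a) set) = card (UNIV :: ('a \<times> 'a) set)"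
    unfolding trace_code_C35_eq by (rule card_image)
  also have "\<dots> = card (subfield_GF q :: 'a set) ^ 4"
    using card_UNIV card_subfield_GF
    by (simp add: card_cartesian_product flip: UNIV_Times_UNIV power_mult)
  finally show ?thesis .
qed

lemma trace_code_C35_params:
  assumes "even m"
  shows "linear_code_params (subfield_GF q :: 'a set) (roots_U q)
           (trace_code q (code_C35 q)) (q + 1) 4 (q - 4)"
proof -
  let ?C = "trace_code q (code_C35 q) :: ('a \<Rightarrow> 'a) set"
  have word: "c \<in> ?C \<longleftrightarrow> (\<exists>A B. c = trace_word A B)" for c
    unfolding trace_code_C35_eq by auto
  have "\<forall>c\<in>?C. \<forall>i. (i \<in> roots_U q \<longrightarrow> c i \<in> subfield_GF q) \<and> (i \<notin> roots_U q \<longrightarrow> c i = 0)"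
    by (auto simp: word trace_word_def trace_rel_in_subfield_GF)
  moreover have "(\<lambda>_. 0) \<in> ?C"
    using trace_word_0 word by metis
  moreover have "\<forall>x\<in>?C. \<forall>y\<in>?C. (\<lambda>i. x i + y i) \<in> ?C"
    by (fastforce simp: word trace_word_add)
  moreover have "\<forall>a\<in>subfield_GF q. \<forall>x\<in>?C. (\<lambda>i. a * x i) \<in> ?C"
    by (fastforce simp: word trace_word_mult_subfield_GF)
  ultimately show ?thesis
    unfolding linear_code_params_def
    using card_roots_U card_trace_code_C35 min_weight_trace_code_C35[OF assms] by simp
qed

end

theorem theorem22:
  fixes m q :: nat
  assumes "card (UNIV :: 'a::{finite,field} set) = q ^ 2"
    and "q = 2 ^ m" and "m \<ge> 4" and "even m"
  shows "linear_code_params (subfield_GF q :: 'a set) (roots_U q)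
           (trace_code q (code_C35 q)) (q + 1) 4 (q - 4)"
  using trace_code_C35_params[OF assms(1,2) _ assms(4)] assms(3) by simp

end
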